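(* There exists an amicable orthogonal design $AOD\big(2^9;\ 2^6_{(8)};\ 2^6_{(8)}\big)$, i.e. a pair $(C;D)$ of $2^9\times2^9$ matrices, $C$ with entries in $\{0,\pm x_1,\ldots,\pm x_8\}$ and $D$ with entries in $\{0,\pm y_1,\ldots,\pm y_8\}$, such that $CC^{\rm T}=\big(2^6\sum_{i=1}^8x_i^2\big)I_{2^9}$, $DD^{\rm T}=\big(2^6\sum_{i=1}^8y_i^2\big)I_{2^9}$ and $CD^{\rm T}=DC^{\rm T}$.
   Context: The notation $u_{(k)}$ in a type means that $u$ is repeated $k$ times. $x_1,\ldots,x_8,y_1,\ldots,y_8$ are sixteen distinct commuting indeterminates. An amicable orthogonal design $AOD(m;c_1,\ldots,c_k;d_1,\ldots,d_\ell)$ is a pair $(X;Y)$ of $m\times m$ matrices with $X$ having entries in $\{0,\pm x_1,\ldots,\pm x_k\}$, $Y$ having entries in $\{0,\pm y_1,\ldots,\pm y_\ell\}$, $XX^{\rm T}=(\sum c_ix_i^2)I_m$, $YY^{\rm T}=(\sum d_iy_i^2)I_m$, and $XY^{\rm T}=YX^{\rm T}$. *)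

theory Defs
  imports Main "HOL-Library.Poly_Mapping"
begin

text \<open>Multivariate polynomials with integer coefficients in countably many
commuting indeterminates: monomials are finitely supported exponent maps
nat \<Rightarrow>0 nat, polynomials finitely supported coefficient maps.\<close>
type_synonym mpoly = "(nat \<Rightarrow>\<^sub>0 nat) \<Rightarrow>\<^sub>0 int"

definition Var :: "nat \<Rightarrow> mpoly" where
  "Var n = Poly_Mapping.single (Poly_Mapping.single n 1) 1"

text \<open>The indeterminates x_1, x_2, ... (index t counts from 0) and y_1, y_2, ...;
all pairwise distinct.\<close>
definition xv :: "nat \<Rightarrow> mpoly" where "xv t = Var (2 * t)"
definition yv :: "nat \<Rightarrow> mpoly" where "yv t = Var (2 * t + 1)"

text \<open>An m x m matrix is a function nat \<Rightarrow> nat \<Rightarrow> mpoly, only indices < m matter.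
Entries of a design in variables v_1..v_k lie in {0, \<plusminus>v_1, ..., \<plusminus>v_k}.\<close>
definition entries_in :: "nat \<Rightarrow> (nat \<Rightarrow> mpoly) \<Rightarrow> nat \<Rightarrow> (nat \<Rightarrow> nat \<Rightarrow> mpoly) \<Rightarrow> bool" where
  "entries_in m v k X \<longleftrightarrow>
     (\<forall>i<m. \<forall>j<m. X i j = 0 \<or> (\<exists>t<k. X i j = v t \<or> X i j = - v t))"

definition gram_ok :: "nat \<Rightarrow> (nat \<Rightarrow> mpoly) \<Rightarrow> nat list \<Rightarrow> (nat \<Rightarrow> nat \<Rightarrow> mpoly) \<Rightarrow> bool" where
  "gram_ok m v c X \<longleftrightarrow>
     (\<forall>i<m. \<forall>j<m. (\<Sum>l<m. X i l * X j l) =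
        (if i = j then (\<Sum>t<length c. of_nat (c ! t) * v t ^ 2) else 0))"

definition is_AOD :: "nat \<Rightarrow> nat list \<Rightarrow> nat list \<Rightarrow> (nat \<Rightarrow> nat \<Rightarrow> mpoly) \<Rightarrow> (nat \<Rightarrow> nat \<Rightarrow> mpoly) \<Rightarrow> bool" where
  "is_AOD m c d X Y \<longleftrightarrow>
     entries_in m xv (length c) X \<and> entries_in m yv (length d) Y \<and>
     gram_ok m xv c X \<and> gram_ok m yv d Y \<and>
     (\<forall>i<m. \<forall>j<m. (\<Sum>l<m. X i l * Y j l) = (\<Sum>l<m. Y i l * X j l))"

end

theory Submission
  imports Defs
begin

text \<open>Each design matrix is a combination \<open>\<Sum>\<^sub>t v\<^sub>t W\<^sub>t\<close> of eight \<open>{0,\<plusminus>1}\<close>-matrices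
of order \<open>2\<^sup>9\<close> with pairwise disjoint supports, so the entries are \<open>0\<close> or \<open>\<plusminus>v\<^sub>t\<close>.
Expanding the Gram matrices, the design conditions reduce to \<open>W\<^sub>s W\<^sub>s\<^sup>T = 2\<^sup>6 I\<close>,
\<open>W\<^sub>s W\<^sub>t\<^sup>T + W\<^sub>t W\<^sub>s\<^sup>T = 0\<close> for \<open>s \<noteq> t\<close> within each family, and \<open>A\<^sub>s B\<^sub>t\<^sup>T = B\<^sub>t A\<^sub>s\<^sup>T\<close> across
the two families. Every \<open>W\<^sub>t\<close> is a Kronecker product of nine \<open>2 \<times> 2\<close> matrices, so
\<open>W\<^sub>s W\<^sub>t\<^sup>T\<close> is the Kronecker product of the factorwise products \<open>p q\<^sup>T\<close>; it is scalar,
skew-symmetric or symmetric as soon as all its factors are scalar, or all are symmetric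
or skew with an odd, respectively even, number of skew ones. These finitely many
conditions on the factors are checked by evaluation.\<close>

section \<open>Kronecker products of \<open>2 \<times> 2\<close> integer matrices\<close>

type_synonym mat2 = "int \<times> int \<times> int \<times> int"

fun entry2 :: "mat2 \<Rightarrow> nat \<Rightarrow> nat \<Rightarrow> int" where
  "entry2 (a, b, c, d) i j =
     (if i = 0 then (if j = 0 then a else b) else (if j = 0 then c else d))"

text \<open>\<open>kron [q\<^sub>0, \<dots>, q\<^sub>k\<^sub>-\<^sub>1]\<close> is \<open>q\<^sub>k\<^sub>-\<^sub>1 \<otimes> \<dots> \<otimes> q\<^sub>0\<close>: bit \<open>r\<close> of a row or column index
selects the row or column of \<open>q\<^sub>r\<close>. Entries with an index \<open>\<ge> 2\<^sup>k\<close> are \<open>0\<close>.\<close>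
fun kron :: "mat2 list \<Rightarrow> nat \<Rightarrow> nat \<Rightarrow> int" where
  "kron [] i j = (if i = 0 \<and> j = 0 then 1 else 0)"
| "kron (q # L) i j = entry2 q (i mod 2) (j mod 2) * kron L (i div 2) (j div 2)"

fun mult_transpose2 :: "mat2 \<Rightarrow> mat2 \<Rightarrow> mat2" where
  "mult_transpose2 (a, b, c, d) (e, f, g, h) = (a*e + b*f, a*g + b*h, c*e + d*f, c*g + d*h)"

fun symmetric2 :: "mat2 \<Rightarrow> bool" where
  "symmetric2 (a, b, c, d) \<longleftrightarrow> b = c"

fun skew2 :: "mat2 \<Rightarrow> bool" where
  "skew2 (a, b, c, d) \<longleftrightarrow> a = 0 \<and> d = 0 \<and> c = - b"

fun scalar2 :: "mat2 \<Rightarrow> bool" where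
  "scalar2 (a, b, c, d) \<longleftrightarrow> b = 0 \<and> c = 0 \<and> d = a"

fun disjoint_support2 :: "mat2 \<Rightarrow> mat2 \<Rightarrow> bool" where
  "disjoint_support2 (a, b, c, d) (e, f, g, h) \<longleftrightarrow>
     a*e = 0 \<and> b*f = 0 \<and> c*g = 0 \<and> d*h = 0"

fun sign_entries2 :: "mat2 \<Rightarrow> bool" where
  "sign_entries2 (a, b, c, d) \<longleftrightarrow>
     a \<in> {-1, 0, 1} \<and> b \<in> {-1, 0, 1} \<and> c \<in> {-1, 0, 1} \<and> d \<in> {-1, 0, 1}"

lemma sum_lessThan_double:
  fixes f :: "nat \<Rightarrow> 'a::comm_monoid_add"
  shows "(\<Sum>k<2 * n. f k) = (\<Sum>k<n. f (2 * k) + f (2 * k + 1))"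
  by (induction n) (auto simp: ac_simps)

lemma entry2_mult_transpose2:
  "i < 2 \<Longrightarrow> j < 2 \<Longrightarrow>
    entry2 p i 0 * entry2 q j 0 + entry2 p i 1 * entry2 q j 1 = entry2 (mult_transpose2 p q) i j"
  by (cases p; cases q) (auto simp: less_2_cases_iff)

lemma kron_mult_transpose:
  assumes "length L = length L'"
  shows "(\<Sum>l<2 ^ length L. kron L i l * kron L' j l) = kron (map2 mult_transpose2 L L') i j"
  using assms
proof (induction L arbitrary: L' i j)
  case Nil
  then show ?case by simp
next
  case (Cons q L)
  then obtain q' M where L': "L' = q' # M" and len: "length L = length M"
    by (cases L') auto
  let ?p = "entry2 q (i mod 2)" and ?p' = "entry2 q' (j mod 2)"
  have "(\<Sum>l<2 ^ length (q # L). kron (q # L) i l * kron L' j l)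
      = (\<Sum>l<2 ^ length L. (?p 0 * ?p' 0 + ?p 1 * ?p' 1) * (kron L (i div 2) l * kron M (j div 2) l))"
    by (simp add: sum_lessThan_double L', simp add: algebra_simps)
  also have "\<dots> = entry2 (mult_transpose2 q q') (i mod 2) (j mod 2)
                    * kron (map2 mult_transpose2 L M) (i div 2) (j div 2)"
    using entry2_mult_transpose2[of "i mod 2" "j mod 2" q q']
    by (simp add: sum_distrib_left[symmetric] Cons.IH[OF len])
  finally show ?case by (simp add: L')
qed

lemma kron_transpose:
  assumes "\<forall>q\<in>set L. symmetric2 q \<or> skew2 q"
  shows "kron L j i = (-1) ^ length (filter (\<lambda>q. \<not> symmetric2 q) L) * kron L i j"
  using assms
proof (induction L arbitrary: i j)
  case Nil
  then show ?case by auto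
next
  case (Cons q L)
  have entry: "entry2 q (j mod 2) (i mod 2) =
      (if symmetric2 q then 1 else -1) * entry2 q (i mod 2) (j mod 2)"
    using Cons.prems by (cases q) (auto simp: less_2_cases_iff)
  have "kron L (j div 2) (i div 2) =
      (-1) ^ length (filter (\<lambda>q. \<not> symmetric2 q) L) * kron L (i div 2) (j div 2)"
    using Cons.prems by (intro Cons.IH) simp
  then show ?case
    by (cases "symmetric2 q") (simp_all add: entry)
qed

lemma kron_scalar:
  assumes "\<forall>q\<in>set L. scalar2 q"
  shows "kron L i j = (if i = j \<and> i < 2 ^ length L then prod_list (map fst L) else 0)"
  using assms
proof (induction L arbitrary: i j)
  case Nil
  then show ?case by auto
next
  case (Cons q L)
  then obtain c where q: "q = (c, 0, 0, c)"
    by (cases q) auto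
  have index_eq: "i = j \<longleftrightarrow> i mod 2 = j mod 2 \<and> i div 2 = j div 2"
    by (metis div_mult_mod_eq)
  have entry: "entry2 q (i mod 2) (j mod 2) = (if i mod 2 = j mod 2 then c else 0)"
    unfolding q by (auto simp: less_2_cases_iff)
  have bound: "i < 2 * 2 ^ length L \<longleftrightarrow> i div 2 < 2 ^ length L"
    by auto
  have "kron L (i div 2) (j div 2) =
      (if i div 2 = j div 2 \<and> i div 2 < 2 ^ length L then prod_list (map fst L) else 0)"
    using Cons.prems by (intro Cons.IH) simp
  then show ?case
    by (simp add: entry bound index_eq q)
qed

lemma kron_disjoint_support:
  assumes "list_ex (\<lambda>(q, q'). disjoint_support2 q q') (zip L L')"
  shows "kron L i j * kron L' i j = 0"
  using assms
proof (induction L arbitrary: L' i j)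
  case Nil
  then show ?case by simp
next
  case (Cons q L)
  then obtain q' M where L': "L' = q' # M"
    by (cases L') auto
  show ?case
  proof (cases "disjoint_support2 q q'")
    case True
    then have "entry2 q (i mod 2) (j mod 2) * entry2 q' (i mod 2) (j mod 2) = 0"
      by (cases q; cases q') auto
    then show ?thesis
      unfolding L' kron.simps by auto
  next
    case False
    then have "kron L (i div 2) (j div 2) * kron M (i div 2) (j div 2) = 0"
      using Cons L' by simp
    then show ?thesis
      unfolding L' kron.simps by (simp add: algebra_simps)
  qed
qed

lemma kron_sign_entries:
  assumes "\<forall>q\<in>set L. sign_entries2 q"
  shows "kron L i j \<in> {-1, 0, 1}"
  using assms
proof (induction L arbitrary: i j)
  case Nil
  then show ?case by simp
next
  case (Cons q L)
  have "entry2 q (i mod 2) (j mod 2) \<in> {-1, 0, 1}"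
    using Cons.prems by (cases q) auto
  moreover have "kron L (i div 2) (j div 2) \<in> {-1, 0, 1}"
    using Cons by simp
  ultimately show ?case
    by auto
qed

section \<open>Designs as combinations of weighing matrices\<close>

definition design_matrix ::
    "(nat \<Rightarrow> 'r::comm_ring_1) \<Rightarrow> nat \<Rightarrow> (nat \<Rightarrow> nat \<Rightarrow> nat \<Rightarrow> int) \<Rightarrow> nat \<Rightarrow> nat \<Rightarrow> 'r" where
  "design_matrix v n W i j = (\<Sum>t<n. of_int (W t i j) * v t)"

lemma sum_design_matrix_products:
  fixes v w :: "nat \<Rightarrow> 'r::comm_ring_1"
  shows "(\<Sum>l<m. design_matrix v n W i l * design_matrix w n W' j l)
       = (\<Sum>s<n. \<Sum>t<n. v s * w t * of_int (\<Sum>l<m. W s i l * W' t j l))"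
proof -
  have "(\<Sum>l<m. design_matrix v n W i l * design_matrix w n W' j l)
      = (\<Sum>l<m. \<Sum>s<n. \<Sum>t<n. v s * w t * of_int (W s i l * W' t j l))"
    unfolding design_matrix_def by (simp add: sum_product algebra_simps)
  also have "\<dots> = (\<Sum>s<n. \<Sum>t<n. \<Sum>l<m. v s * w t * of_int (W s i l * W' t j l))"
    by (subst sum.swap) (simp add: sum.swap[of _ "{..<n}" "{..<m}"])
  finally show ?thesis
    by (simp add: sum_distrib_left)
qed

lemma quadratic_form_skew_off_diagonal:
  fixes v :: "nat \<Rightarrow> 'r::comm_ring_1"
  assumes "\<And>s. s < n \<Longrightarrow> G s s = g"
    and "\<And>s t. s < n \<Longrightarrow> t < n \<Longrightarrow> s \<noteq> t \<Longrightarrow> G s t + G t s = 0"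
  shows "(\<Sum>s<n. \<Sum>t<n. v s * v t * of_int (G s t)) = of_int g * (\<Sum>s<n. v s ^ 2)"
  using assms
proof (induction n)
  case 0
  then show ?case by simp
next
  case (Suc n)
  have "v s * v n * of_int (G s n) + v n * v s * of_int (G n s) = 0" if "s < n" for s
  proof -
    have "v s * v n * of_int (G s n) + v n * v s * of_int (G n s) = v s * v n * of_int (G s n + G n s)"
      by (simp add: algebra_simps)
    also have "\<dots> = 0"
      using Suc.prems(2)[of s n] that by simp
    finally show ?thesis .
  qed
  then have "(\<Sum>s<n. v s * v n * of_int (G s n) + v n * v s * of_int (G n s)) = 0"
    by simp
  with Suc show ?case
    by (simp add: sum.distrib algebra_simps power2_eq_square)
qed

lemma gram_ok_design_matrix:
  assumes "\<And>s i j. s < n \<Longrightarrow> i < m \<Longrightarrow> j < m \<Longrightarrow>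
      (\<Sum>l<m. W s i l * W s j l) = (if i = j then int g else 0)"
    and "\<And>s t i j. s < n \<Longrightarrow> t < n \<Longrightarrow> s \<noteq> t \<Longrightarrow> i < m \<Longrightarrow> j < m \<Longrightarrow>
      (\<Sum>l<m. W s i l * W t j l) + (\<Sum>l<m. W t i l * W s j l) = 0"
  shows "gram_ok m v (replicate n g) (design_matrix v n W)"
  unfolding gram_ok_def
proof (intro allI impI)
  fix i j assume "i < m" "j < m"
  then have "(\<Sum>l<m. design_matrix v n W i l * design_matrix v n W j l)
      = of_int (if i = j then int g else 0) * (\<Sum>s<n. v s ^ 2)"
    unfolding sum_design_matrix_products
    by (intro quadratic_form_skew_off_diagonal) (simp_all add: assms)
  then show "(\<Sum>l<m. design_matrix v n W i l * design_matrix v n W j l) =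
      (if i = j then \<Sum>t<length (replicate n g). of_nat (replicate n g ! t) * v t ^ 2 else 0)"
    by (simp add: sum_distrib_left)
qed

lemma entries_in_design_matrix:
  assumes "\<And>s t i j. s < n \<Longrightarrow> t < n \<Longrightarrow> s \<noteq> t \<Longrightarrow> W s i j * W t i j = 0"
    and "\<And>s i j. s < n \<Longrightarrow> W s i j \<in> {-1, 0, 1}"
  shows "entries_in m v n (design_matrix v n W)"
  unfolding entries_in_def
proof (intro allI impI)
  fix i j
  show "design_matrix v n W i j = 0 \<or>
      (\<exists>t<n. design_matrix v n W i j = v t \<or> design_matrix v n W i j = - v t)"
  proof (cases "\<exists>t<n. W t i j \<noteq> 0")
    case False
    then show ?thesis
      by (simp add: design_matrix_def)
  next
    case True
    then obtain t where t: "t < n" "W t i j \<noteq> 0"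
      by blast
    then have "W s i j = 0" if "s < n" "s \<noteq> t" for s
      using assms(1)[OF that(1) t(1) that(2), of i j] t(2) by simp
    then have "design_matrix v n W i j = of_int (W t i j) * v t"
      unfolding design_matrix_def using t(1) by (simp add: sum.remove[of _ t])
    moreover have "W t i j = 1 \<or> W t i j = -1"
      using assms(2)[OF t(1)] t(2) by auto
    ultimately show ?thesis
      using t(1) by auto
  qed
qed

lemma design_matrices_amicable:
  fixes v w :: "nat \<Rightarrow> 'r::comm_ring_1"
  assumes "\<And>s t. s < n \<Longrightarrow> t < n \<Longrightarrow>
      (\<Sum>l<m. W s i l * W' t j l) = (\<Sum>l<m. W' t i l * W s j l)"
  shows "(\<Sum>l<m. design_matrix v n W i l * design_matrix w n W' j l)
       = (\<Sum>l<m. design_matrix w n W' i l * design_matrix v n W j l)"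
proof -
  have "(\<Sum>s<n. \<Sum>t<n. v s * w t * of_int (\<Sum>l<m. W s i l * W' t j l))
      = (\<Sum>t<n. \<Sum>s<n. w t * v s * of_int (\<Sum>l<m. W' t i l * W s j l))"
    by (subst sum.swap) (simp add: assms mult.commute)
  then show ?thesis
    unfolding sum_design_matrix_products .
qed

definition skew_factors :: "mat2 list \<Rightarrow> bool" where
  "skew_factors M \<longleftrightarrow>
     (\<forall>q\<in>set M. symmetric2 q \<or> skew2 q) \<and> odd (length (filter (\<lambda>q. \<not> symmetric2 q) M))"

definition symmetric_factors :: "mat2 list \<Rightarrow> bool" where
  "symmetric_factors M \<longleftrightarrow>
     (\<forall>q\<in>set M. symmetric2 q \<or> skew2 q) \<and> even (length (filter (\<lambda>q. \<not> symmetric2 q) M))"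

lemma kron_mult_transpose_scalar:
  assumes "\<forall>q\<in>set (map2 mult_transpose2 L L). scalar2 q" and "i < 2 ^ length L"
  shows "(\<Sum>l<2 ^ length L. kron L i l * kron L j l) =
    (if i = j then prod_list (map fst (map2 mult_transpose2 L L)) else 0)"
  using assms by (simp add: kron_mult_transpose kron_scalar)

lemma kron_mult_transpose_skew:
  assumes "length L = length L'" and "skew_factors (map2 mult_transpose2 L L')"
  shows "(\<Sum>l<2 ^ length L. kron L i l * kron L' j l) + (\<Sum>l<2 ^ length L. kron L' i l * kron L j l) = 0"
proof -
  let ?P = "map2 mult_transpose2 L L'"
  have "(\<Sum>l<2 ^ length L. kron L' i l * kron L j l) = (\<Sum>l<2 ^ length L. kron L j l * kron L' i l)"
    by (simp add: mult.commute)
  also have "\<dots> = kron ?P j i"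
    using assms(1) by (rule kron_mult_transpose)
  also have "\<dots> = - kron ?P i j"
    using kron_transpose[where L = ?P and i = i and j = j] assms(2) by (simp add: skew_factors_def)
  also have "kron ?P i j = (\<Sum>l<2 ^ length L. kron L i l * kron L' j l)"
    using assms(1) by (rule kron_mult_transpose[symmetric])
  finally show ?thesis
    by simp
qed

lemma kron_mult_transpose_symmetric:
  assumes "length L = length L'" and "symmetric_factors (map2 mult_transpose2 L L')"
  shows "(\<Sum>l<2 ^ length L. kron L i l * kron L' j l) = (\<Sum>l<2 ^ length L. kron L' i l * kron L j l)"
proof -
  let ?P = "map2 mult_transpose2 L L'"
  have "(\<Sum>l<2 ^ length L. kron L' i l * kron L j l) = (\<Sum>l<2 ^ length L. kron L j l * kron L' i l)"
    by (simp add: mult.commute)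
  also have "\<dots> = kron ?P j i"
    using assms(1) by (rule kron_mult_transpose)
  also have "\<dots> = kron ?P i j"
    using kron_transpose[where L = ?P and i = i and j = j] assms(2) by (simp add: symmetric_factors_def)
  also have "\<dots> = (\<Sum>l<2 ^ length L. kron L i l * kron L' j l)"
    using assms(1) by (rule kron_mult_transpose[symmetric])
  finally show ?thesis
    by simp
qed

definition weighing_factors :: "nat \<Rightarrow> nat \<Rightarrow> nat \<Rightarrow> mat2 list list \<Rightarrow> bool" where
  "weighing_factors n k g F \<longleftrightarrow> (\<forall>s<n. length (F ! s) = k \<and> (\<forall>q\<in>set (F ! s). sign_entries2 q)
     \<and> (\<forall>q\<in>set (map2 mult_transpose2 (F ! s) (F ! s)). scalar2 q)
     \<and> prod_list (map fst (map2 mult_transpose2 (F ! s) (F ! s))) = int g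
     \<and> (\<forall>t<n. s \<noteq> t \<longrightarrow> list_ex (\<lambda>(q, q'). disjoint_support2 q q') (zip (F ! s) (F ! t))
                         \<and> skew_factors (map2 mult_transpose2 (F ! s) (F ! t))))"

lemma weighing_factorsD:
  assumes "weighing_factors n k g F" and "s < n"
  shows "length (F ! s) = k" and "\<forall>q\<in>set (F ! s). sign_entries2 q"
    and "\<forall>q\<in>set (map2 mult_transpose2 (F ! s) (F ! s)). scalar2 q"
    and "prod_list (map fst (map2 mult_transpose2 (F ! s) (F ! s))) = int g"
    and "t < n \<Longrightarrow> s \<noteq> t \<Longrightarrow> list_ex (\<lambda>(q, q'). disjoint_support2 q q') (zip (F ! s) (F ! t))"
    and "t < n \<Longrightarrow> s \<noteq> t \<Longrightarrow> skew_factors (map2 mult_transpose2 (F ! s) (F ! t))"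
  using assms unfolding weighing_factors_def by blast+

lemma gram_ok_kron_design:
  assumes F: "weighing_factors n k g F"
  shows "gram_ok (2 ^ k) v (replicate n g) (design_matrix v n (\<lambda>s. kron (F ! s)))"
proof (rule gram_ok_design_matrix)
  fix s i j :: nat
  assume "s < n" "i < 2 ^ k"
  then show "(\<Sum>l<2 ^ k. kron (F ! s) i l * kron (F ! s) j l) = (if i = j then int g else 0)"
    using kron_mult_transpose_scalar[of "F ! s" i j] weighing_factorsD[OF F] by simp
next
  fix s t i j :: nat
  assume "s < n" "t < n" "s \<noteq> t"
  then show "(\<Sum>l<2 ^ k. kron (F ! s) i l * kron (F ! t) j l) + (\<Sum>l<2 ^ k. kron (F ! t) i l * kron (F ! s) j l) = 0"
    using kron_mult_transpose_skew[of "F ! s" "F ! t" i j] weighing_factorsD[OF F] by simp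
qed

lemma entries_in_kron_design:
  assumes F: "weighing_factors n k g F"
  shows "entries_in (2 ^ k) v n (design_matrix v n (\<lambda>s. kron (F ! s)))"
proof (rule entries_in_design_matrix)
  fix s t i j :: nat
  assume "s < n" "t < n" "s \<noteq> t"
  then show "kron (F ! s) i j * kron (F ! t) i j = 0"
    by (intro kron_disjoint_support weighing_factorsD(5)[OF F])
next
  fix s i j :: nat
  assume "s < n"
  then show "kron (F ! s) i j \<in> {-1, 0, 1}"
    by (intro kron_sign_entries weighing_factorsD(2)[OF F])
qed

lemma is_AOD_kron_design:
  assumes A: "weighing_factors n k g A" and B: "weighing_factors n k g B"
    and AB: "\<forall>s<n. \<forall>t<n. symmetric_factors (map2 mult_transpose2 (A ! s) (B ! t))"
  shows "is_AOD (2 ^ k) (replicate n g) (replicate n g)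
    (design_matrix xv n (\<lambda>s. kron (A ! s))) (design_matrix yv n (\<lambda>s. kron (B ! s)))"
proof -
  have "(\<Sum>l<2 ^ k. kron (A ! s) i l * kron (B ! t) j l) = (\<Sum>l<2 ^ k. kron (B ! t) i l * kron (A ! s) j l)"
    if "s < n" "t < n" for s t i j
    using kron_mult_transpose_symmetric[of "A ! s" "B ! t" i j] AB that
      weighing_factorsD(1)[OF A] weighing_factorsD(1)[OF B] by simp
  then show ?thesis
    unfolding is_AOD_def
    by (simp add: entries_in_kron_design[OF A] entries_in_kron_design[OF B]
        gram_ok_kron_design[OF A] gram_ok_kron_design[OF B] design_matrices_amicable)
qed

text \<open>In both families the first three factors of member \<open>t\<close> are signed diagonal or
anti-diagonal according to the binary digits of \<open>t\<close>, which makes the supports disjoint;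
the remaining six factors are \<open>\<plusminus>1\<close>-matrices, which gives weight \<open>2\<^sup>6\<close>.\<close>

definition A_factors :: "mat2 list list" where
  "A_factors = [[(1,0,0,-1), (1,0,0,1), (1,0,0,1), (1,-1,1,1), (-1,1,1,1), (-1,1,1,1), (1,1,-1,1), (-1,1,1,1), (1,1,1,-1)],
    [(0,1,1,0), (1,0,0,-1), (1,0,0,-1), (-1,1,1,1), (1,1,1,-1), (-1,1,1,1), (1,-1,1,1), (1,1,-1,1), (1,1,1,-1)],
    [(1,0,0,1), (0,1,1,0), (1,0,0,1), (1,1,1,-1), (1,1,1,-1), (1,1,-1,1), (1,1,-1,1), (1,1,-1,1), (1,1,-1,1)],
    [(0,-1,1,0), (0,1,1,0), (1,0,0,1), (1,-1,1,1), (1,-1,1,1), (1,1,-1,1), (1,-1,1,1), (-1,1,1,1), (1,-1,1,1)],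
    [(1,0,0,-1), (1,0,0,-1), (0,-1,1,0), (1,1,-1,1), (1,1,-1,1), (-1,1,1,1), (-1,1,1,1), (1,1,1,-1), (1,-1,1,1)],
    [(0,1,1,0), (1,0,0,1), (0,-1,1,0), (1,1,-1,1), (-1,1,1,1), (1,1,-1,1), (1,1,-1,1), (1,-1,1,1), (1,1,1,-1)],
    [(1,0,0,-1), (0,-1,1,0), (0,1,1,0), (-1,1,1,1), (1,1,1,-1), (1,1,1,-1), (1,1,-1,1), (1,-1,1,1), (1,-1,1,1)],
    [(0,1,1,0), (0,-1,1,0), (0,-1,1,0), (-1,1,1,1), (1,1,-1,1), (-1,1,1,1), (1,1,1,-1), (1,-1,1,1), (1,1,-1,1)]]"

definition B_factors :: "mat2 list list" where
  "B_factors = [[(1,0,0,1), (1,0,0,-1), (1,0,0,-1), (-1,1,1,1), (1,-1,1,1), (1,1,1,-1), (-1,1,1,1), (1,1,-1,1), (-1,1,1,1)],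
    [(0,1,1,0), (1,0,0,1), (1,0,0,-1), (1,1,-1,1), (1,1,-1,1), (1,1,1,-1), (-1,1,1,1), (1,1,-1,1), (-1,1,1,1)],
    [(1,0,0,-1), (0,-1,1,0), (1,0,0,1), (-1,1,1,1), (1,1,1,-1), (-1,1,1,1), (1,-1,1,1), (-1,1,1,1), (-1,1,1,1)],
    [(0,-1,1,0), (0,1,1,0), (1,0,0,1), (1,-1,1,1), (1,1,-1,1), (1,1,-1,1), (1,1,-1,1), (-1,1,1,1), (1,-1,1,1)],
    [(1,0,0,1), (1,0,0,1), (0,1,1,0), (1,-1,1,1), (1,1,-1,1), (1,-1,1,1), (-1,1,1,1), (1,-1,1,1), (1,1,-1,1)],
    [(0,1,1,0), (1,0,0,1), (0,1,1,0), (1,1,-1,1), (-1,1,1,1), (1,1,1,-1), (1,-1,1,1), (1,1,1,-1), (-1,1,1,1)],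
    [(1,0,0,-1), (0,1,1,0), (0,1,1,0), (1,-1,1,1), (1,1,-1,1), (1,1,1,-1), (1,1,1,-1), (1,1,1,-1), (1,1,1,-1)],
    [(0,-1,1,0), (0,-1,1,0), (0,1,1,0), (1,1,-1,1), (1,1,1,-1), (-1,1,1,1), (1,-1,1,1), (1,1,1,-1), (-1,1,1,1)]]"

lemma all_less_upt_iff: "(\<forall>s<n. P s) \<longleftrightarrow> list_all P [0..<n]"
  by (auto simp: list_all_iff)

lemma weighing_factors_A: "weighing_factors 8 9 64 A_factors"
  unfolding weighing_factors_def all_less_upt_iff by code_simp

lemma weighing_factors_B: "weighing_factors 8 9 64 B_factors"
  unfolding weighing_factors_def all_less_upt_iff by code_simp

lemma amicable_factors_A_B:
  "\<forall>s<8. \<forall>t<8. symmetric_factors (map2 mult_transpose2 (A_factors ! s) (B_factors ! t))"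
  unfolding all_less_upt_iff by code_simp

theorem lemma5p2:
  shows "\<exists>C D. is_AOD (2^9) (replicate 8 (2^6)) (replicate 8 (2^6)) C D"
  using is_AOD_kron_design[OF weighing_factors_A weighing_factors_B amicable_factors_A_B] by auto

end
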